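(* Let $m,n\ge1$, $q=2^m$, and let $L(x)=ax^{2^k}+bx^{2^l}$ with $a,b\in\mathbb F_{q^n}$ and nonnegative integers $k,l$, such that $L$ is nonzero as a map on $\mathbb F_{q^n}$. Let $d=\gcd(l-k,mn)$, $e=\gcd(l-k,m)$ and $r=d/e$ (so $r$ divides $n$). If $a^{\frac{q^n-1}{2^d-1}}\ne b^{\frac{q^n-1}{2^d-1}}$, then $|\ker\mathrm{Tr}\cap\ker L^\prime|=1$. Assume now $a^{\frac{q^n-1}{2^d-1}}=b^{\frac{q^n-1}{2^d-1}}$. If $k\equiv l\pmod m$ and $a+b\in\mathbb F_q$, then \[|\ker\mathrm{Tr}\cap\ker L^\prime|=\begin{cases}2^d&\text{if }a+b\ne0\text{, or }a+b=0\text{ and }\mathrm{Tr}_r(a^{-1})=0,\\ q^{r-1}&\text{otherwise.}\end{cases}\] If $k\not\equiv l\pmod m$ and $a,b\in\mathbb F_q$, then \[|\ker\mathrm{Tr}\cap\ker L^\prime|=\begin{cases}2^d&\text{if }a^{\frac{q-1}{2^e-1}}\ne b^{\frac{q-1}{2^e-1}}\text{ or }\frac nr\text{ is even},\\ 2^{d-e}&\text{otherwise.}\end{cases}\]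
   Context: $\mathbb F_{q^n}$ is the finite field with $q^n$ elements. For $k'\mid n$, $\mathrm{Tr}_{k'}$ denotes the trace map of $\mathbb F_{q^n}$ over $\mathbb F_{q^{k'}}$, and $\mathrm{Tr}=\mathrm{Tr}_1$. Polynomials are regarded as maps on $\mathbb F_{q^n}$. For a $2$-linear polynomial $L(x)=\sum_j a_jx^{2^j}$ over $\mathbb F_{q^n}$, its adjoint is $L^\prime(x)=\sum_j(a_jx)^{2^{-j}}$, where $y\mapsto y^{2^{-j}}$ is the inverse of the automorphism $y\mapsto y^{2^j}$ of $\mathbb F_{q^n}$; here $L'(x)=(ax)^{2^{-k}}+(bx)^{2^{-l}}$. $\ker$ denotes the kernel of an additive map on $\mathbb F_{q^n}$. *)

theory Defs
  imports Main "HOL-Number_Theory.Cong"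
begin

definition subfield_q :: "nat \<Rightarrow> 'a::field set" where
  "subfield_q m = {x. x ^ (2 ^ m) = x}"

text \<open>Trace of F_{q^n} over F_{q^k'} for k' dividing n, where q = 2^m.\<close>
definition rel_trace :: "nat \<Rightarrow> nat \<Rightarrow> nat \<Rightarrow> 'a::field \<Rightarrow> 'a" where
  "rel_trace m n k' x = (\<Sum>i<n div k'. x ^ ((2 ^ m) ^ (k' * i)))"

definition abs_trace :: "nat \<Rightarrow> nat \<Rightarrow> 'a::field \<Rightarrow> 'a" where
  "abs_trace m n x = rel_trace m n 1 x"

definition frob_inv :: "nat \<Rightarrow> 'a::field \<Rightarrow> 'a" where
  "frob_inv j y = (THE z. z ^ (2 ^ j) = y)"

text \<open>Adjoint L'(x) = (a x)^(2^(-k)) + (b x)^(2^(-l)) of L(x) = a x^(2^k) + b x^(2^l).\<close>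
definition adjoint_L :: "'a::field \<Rightarrow> 'a \<Rightarrow> nat \<Rightarrow> nat \<Rightarrow> 'a \<Rightarrow> 'a" where
  "adjoint_L a b k l x = frob_inv k (a * x) + frob_inv l (b * x)"

end

theory Submission
  imports Defs "HOL-Number_Theory.Residues" "HOL-Computational_Algebra.Polynomial"
begin

(*
  In characteristic 2 the condition L'(x) = 0 reads (a x)^(2^T) = b x, where the natural number
  T = N k - k + l represents l - k modulo N = m n. The map w -> w^(2^T - 1) sends the nonzero
  elements of F_(2^M) onto the E-th roots of unity, E = (2^M - 1)/(2^gcd(T,M) - 1), because its
  fibres are cosets of the nonzero elements of F_(2^gcd(T,M)). Hence for nonzero a, b in F_(2^M)
  the equation has a nonzero root w in F_(2^M) iff a^E = b^E, and then its roots in the whole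
  field form the line w F_(2^d), d = gcd(T, N).

  If m divides T, then Tr(b x) = Tr((a x)^(2^T)) =
  Tr(a x), so (a + b) Tr(x) = 0; if moreover a = b, the roots are a^(-1) F_(2^d), and transitivity
  of the trace turns Tr(a^(-1) y) into the trace of Tr_r(a^(-1)) y from F_(2^d) to F_q. If a and b
  lie in F_q, the trace maps roots to roots in F_q, so it vanishes on all roots unless w can be
  chosen in F_q; then Tr(w y) = w (n/r) Tr(y), where Tr now is the trace from F_(2^d) to F_(2^e).
  Since a trace from F_(2^(M s)) onto F_(2^M) has a kernel of index 2^M, the counts follow.
*)

section \<open>Arithmetic of the exponents\<close>

lemma two_power_minus_one_dvd:
  assumes "g dvd M"
  shows "(2::nat) ^ g - 1 dvd 2 ^ M - 1"
proof -
  obtain c where M: "M = g * c" using assms by blast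
  have "[(2::nat) ^ g = 1] (mod 2 ^ g - 1)"
    by (subst cong_altdef_nat) auto
  then have "[((2::nat) ^ g) ^ c = 1 ^ c] (mod 2 ^ g - 1)"
    by (rule cong_pow)
  then have "(2::nat) ^ g - 1 dvd (2 ^ g) ^ c - 1"
    by (subst (asm) cong_altdef_nat) auto
  then show ?thesis by (simp add: M power_mult)
qed

lemma two_power_minus_one_div_mult:
  assumes "g dvd M"
  shows "(2 ^ M - 1) div (2 ^ g - 1) * (2 ^ g - 1) = (2::nat) ^ M - 1"
  using two_power_minus_one_dvd[OF assms] by simp

lemma two_power_minus_one_div_pos:
  assumes "g dvd M" "0 < M"
  shows "0 < ((2::nat) ^ M - 1) div (2 ^ g - 1)"
proof -
  have "(1::nat) < 2 ^ M" using assms(2) one_less_power[of "2::nat" M] by simp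
  then show ?thesis
    using two_power_minus_one_div_mult[OF assms(1)] by (metis gr0I mult_0 zero_less_diff)
qed

lemma int_shift_eq:
  fixes M N k l :: nat
  assumes "M dvd N" "0 < N"
  obtains c where "int (N * k - k + l) = int l - int k + int M * c"
proof -
  obtain c where N: "N = M * c" using assms(1) by blast
  have "k \<le> N * k" using assms(2) by simp
  then have "int (N * k - k + l) = int N * int k - int k + int l"
    by (simp only: of_nat_add of_nat_diff of_nat_mult)
  also have "\<dots> = int l - int k + int M * (int c * int k)"
    by (simp add: N algebra_simps)
  finally show thesis using that by blast
qed

lemma gcd_shift_eq:
  fixes M N k l :: nat
  assumes "M dvd N" "0 < N"
  shows "gcd (N * k - k + l) M = nat (gcd (int l - int k) (int M))"
proof -
  obtain c where c: "int (N * k - k + l) = int l - int k + int M * c"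
    using int_shift_eq[OF assms] .
  have "gcd (int (N * k - k + l)) (int M) = gcd (int M) (int (N * k - k + l) mod int M)"
    by (rule gcd_red_int)
  also have "\<dots> = gcd (int M) ((int l - int k) mod int M)"
    unfolding c by simp
  also have "\<dots> = gcd (int l - int k) (int M)"
    by (rule gcd_red_int[symmetric])
  finally show ?thesis
    by (metis gcd_int_int_eq nat_int)
qed

lemma dvd_shift_iff_cong:
  fixes M N k l :: nat
  assumes "M dvd N" "0 < N"
  shows "M dvd N * k - k + l \<longleftrightarrow> [k = l] (mod M)"
proof -
  obtain c where c: "int (N * k - k + l) = int l - int k + int M * c"
    using int_shift_eq[OF assms] .
  have "M dvd N * k - k + l \<longleftrightarrow> int M dvd int (N * k - k + l)"
    by (rule of_nat_dvd_iff[symmetric])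
  also have "\<dots> \<longleftrightarrow> [int k = int l] (mod int M)"
    unfolding c by (simp add: cong_iff_dvd_diff dvd_diff_commute mult.commute[of "int M"])
  finally show ?thesis by (simp add: cong_int_iff)
qed

lemma gcd_quotients_coprime:
  fixes m n T :: nat
  assumes "0 < m" "d = gcd T (m * n)" "e = gcd T m"
  shows "d = e * (d div e)" "m = e * (m div e)" "coprime (m div e) (d div e)" "d div e dvd n"
proof -
  have "e dvd d" using assms by (simp add: dvd_mult2)
  then show d: "d = e * (d div e)" by simp
  show m: "m = e * (m div e)" using assms(3) by simp
  have "gcd m d = gcd (gcd m T) (m * n)"
    by (simp add: assms(2) gcd.assoc)
  also have "\<dots> = e"
    using assms(3) by (simp add: gcd.commute gcd_nat.absorb1)
  finally have "gcd m d = e" .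
  then show coprime: "coprime (m div e) (d div e)"
    using div_gcd_coprime[of m d] assms(1) by simp
  have "e * (d div e) dvd e * ((m div e) * n)"
    using d m assms(2) by (metis gcd_dvd2 mult.assoc)
  moreover have "0 < e" using assms(1,3) by simp
  ultimately have "d div e dvd (m div e) * n"
    using nat_mult_dvd_cancel1 by blast
  then show "d div e dvd n"
    using coprime by (simp add: coprime_commute coprime_dvd_mult_right_iff)
qed

lemma mult_eq_mult_bounded_imp_eq:
  fixes i k d e :: nat
  assumes "i * k = e * d" "i \<le> e" "k \<le> d" "0 < e"
  shows "k = d"
proof -
  have "e * d \<le> e * k"
    using mult_le_mono1[OF assms(2), of k] assms(1) by simp
  then show ?thesis using assms(3,4) by simp
qed

lemma card_eq_card_image_mult_fibre:
  assumes "finite A" and "\<And>x. x \<in> A \<Longrightarrow> card {z \<in> A. f z = f x} = k"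
  shows "card A = card (f ` A) * k"
proof -
  have "A = (\<Union>y\<in>f ` A. {z \<in> A. f z = y})" by blast
  moreover have "card (\<Union>y\<in>f ` A. {z \<in> A. f z = y}) = (\<Sum>y\<in>f ` A. card {z \<in> A. f z = y})"
    using assms(1) by (intro card_UN_disjoint) auto
  ultimately have "card A = (\<Sum>y\<in>f ` A. card {z \<in> A. f z = y})" by simp
  also have "\<dots> = (\<Sum>y\<in>f ` A. k)"
    using assms(2) by (intro sum.cong) auto
  finally show ?thesis by simp
qed

lemma card_unity_roots_le:
  assumes "0 < D"
  shows "card {x::'a::idom. x ^ D = 1} \<le> D"
proof -
  let ?p = "monom (1::'a) D + [:-1:]"
  have deg: "degree ?p = D"
    using assms by (simp add: degree_add_eq_left degree_monom_eq)
  then have "?p \<noteq> 0" using assms by auto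
  moreover have "{x. poly ?p x = 0} = {x. x ^ D = 1}"
    by (simp add: poly_monom)
  ultimately show ?thesis
    using card_poly_roots_bound[of ?p] deg by simp
qed

lemma degree_sum_monom_two_power:
  assumes "0 < M"
  shows "degree (\<Sum>i<Suc s. monom (1::'a::comm_ring_1) (2 ^ (M * i))) = 2 ^ (M * s)"
proof (induction s)
  case (Suc s)
  have "(2::nat) ^ (M * s) < 2 ^ (M * Suc s)"
    using assms by simp
  then show ?case
    using Suc by (subst sum.lessThan_Suc) (simp add: degree_add_eq_right degree_monom_eq)
qed (simp add: degree_monom_eq)

section \<open>Fixed fields of powers of the Frobenius map\<close>

lemma power_card_UNIV:
  fixes x :: "'a::{field,finite}"
  shows "x ^ card (UNIV :: 'a set) = x"
proof (cases "x = 0")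
  case False
  let ?U = "UNIV - {0::'a}"
  have "(\<Prod>y\<in>?U. x * y) = (\<Prod>y\<in>?U. y)"
    using False by (intro prod.reindex_bij_witness[of _ "\<lambda>y. y / x" "\<lambda>y. x * y"]) auto
  moreover have "(\<Prod>y\<in>?U. y) \<noteq> 0" by simp
  ultimately have "x ^ card ?U = 1"
    by (simp add: prod.distrib)
  moreover have "card (UNIV :: 'a set) = card ?U + 1"
    using finite_UNIV_card_ge_0[where 'a='a] by (simp add: card_Diff_singleton)
  ultimately show ?thesis
    by (metis power_add power_one_right mult_1)
qed (simp add: finite_UNIV_card_ge_0)

lemma power_two_power_add: "(x::'a::monoid_mult) ^ 2 ^ (i + j) = (x ^ 2 ^ i) ^ 2 ^ j"
  by (simp only: power_add power_mult)

(* subfield_q M is used for every exponent M: it is the set fixed by x -> x^(2^M), which in a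
   field of order 2^N is the subfield F_(2^M) whenever M divides N. Likewise abs_trace M s
   serves as the trace from F_(2^(M s)) to F_(2^M). *)

lemma subfield_q_0 [simp]: "0 \<in> subfield_q M"
  and subfield_q_1 [simp]: "1 \<in> subfield_q M"
  by (simp_all add: subfield_q_def)

lemma subfield_q_mult: "x \<in> subfield_q M \<Longrightarrow> y \<in> subfield_q M \<Longrightarrow> x * y \<in> subfield_q M"
  by (simp add: subfield_q_def power_mult_distrib)

lemma subfield_q_divide: "x \<in> subfield_q M \<Longrightarrow> y \<in> subfield_q M \<Longrightarrow> x / y \<in> subfield_q M"
  by (simp add: subfield_q_def power_divide)

lemma subfield_q_power:
  assumes "x \<in> subfield_q M"
  shows "x ^ j \<in> subfield_q M"
proof -
  have "(x ^ j) ^ 2 ^ M = (x ^ 2 ^ M) ^ j"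
    by (simp only: power_mult[symmetric] mult.commute)
  then show ?thesis using assms by (simp add: subfield_q_def)
qed

lemma subfield_q_subset:
  assumes "g dvd M"
  shows "subfield_q g \<subseteq> subfield_q M"
proof
  fix x :: 'a assume x: "x \<in> subfield_q g"
  obtain c where "M = g * c" using assms by blast
  moreover have "x ^ 2 ^ (g * c) = x" for c
  proof (induction c)
    case (Suc c)
    have "x ^ 2 ^ (g * Suc c) = (x ^ 2 ^ (g * c)) ^ 2 ^ g"
      by (simp add: power_add power_mult[symmetric] mult.commute)
    then show ?case using Suc x by (simp add: subfield_q_def)
  qed simp
  ultimately show "x \<in> subfield_q M" by (simp add: subfield_q_def)
qed

lemma subfield_q_power_two_power:
  assumes "x \<in> subfield_q M"
  shows "x ^ 2 ^ B = x ^ 2 ^ (B mod M)"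
proof -
  have "x ^ 2 ^ (M * (B div M)) = x"
    using subfield_q_subset[of M "M * (B div M)"] assms by (auto simp: subfield_q_def)
  moreover have "x ^ 2 ^ B = (x ^ 2 ^ (M * (B div M))) ^ 2 ^ (B mod M)"
    by (metis power_add power_mult mult_div_mod_eq)
  ultimately show ?thesis by simp
qed

lemma subfield_q_Int:
  assumes "M \<noteq> 0"
  shows "subfield_q T \<inter> subfield_q M = subfield_q (gcd T M)"
proof (intro equalityI subsetI)
  fix x :: 'a assume x: "x \<in> subfield_q T \<inter> subfield_q M"
  obtain u v where uv: "M * u = T * v + gcd M T"
    using bezout_nat[OF assms] by blast
  have "x = x ^ 2 ^ (M * u)"
    using x subfield_q_subset[of M "M * u"] by (auto simp: subfield_q_def)
  also have "\<dots> = (x ^ 2 ^ (T * v)) ^ 2 ^ gcd M T"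
    by (simp add: uv power_add power_mult)
  also have "\<dots> = x ^ 2 ^ gcd M T"
    using x subfield_q_subset[of T "T * v"] by (auto simp: subfield_q_def)
  finally show "x \<in> subfield_q (gcd T M)"
    by (simp add: subfield_q_def gcd.commute)
qed (use subfield_q_subset[of "gcd T M" T] subfield_q_subset[of "gcd T M" M] in auto)

lemma subfield_q_iff_power_eq_1:
  fixes x :: "'a::field"
  assumes "x \<noteq> 0"
  shows "x \<in> subfield_q M \<longleftrightarrow> x ^ (2 ^ M - 1) = 1"
proof -
  have "x ^ 2 ^ M = x * x ^ (2 ^ M - 1)"
    by (simp flip: power_Suc)
  then show ?thesis using assms by (simp add: subfield_q_def)
qed

lemma subfield_q_power_two_power_minus_1_eq_1:
  fixes x :: "'a::field"
  assumes "x \<in> subfield_q M" "x \<noteq> 0" "E = (2 ^ M - 1) div (2 ^ gcd T M - 1)"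
  shows "x ^ ((2 ^ T - 1) * E) = 1"
proof -
  obtain s where s: "(2::nat) ^ T - 1 = (2 ^ gcd T M - 1) * s"
    using two_power_minus_one_dvd[of "gcd T M" T] by auto
  have "(2 ^ T - 1) * E = s * ((2 ^ gcd T M - 1) * E)"
    by (simp only: s mult_ac)
  also have "(2 ^ gcd T M - 1) * E = 2 ^ M - 1"
    using two_power_minus_one_div_mult[of "gcd T M" M] assms(3) by (simp add: mult.commute)
  finally have "(2 ^ T - 1) * E = (2 ^ M - 1) * s"
    by (simp only: mult.commute)
  then show ?thesis
    using assms(1,2) by (simp add: subfield_q_iff_power_eq_1 power_mult)
qed

lemma card_image_mult_filter:
  fixes w :: "'a::field"
  assumes "w \<noteq> 0"
  shows "card {x \<in> (\<lambda>y. w * y) ` S. P x} = card {y \<in> S. P (w * y)}"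
proof -
  have "{x \<in> (\<lambda>y. w * y) ` S. P x} = (\<lambda>y. w * y) ` {y \<in> S. P (w * y)}" by blast
  then show ?thesis
    using assms by (simp add: card_image inj_on_def)
qed

lemma subfield_q_image_mult:
  fixes c :: "'a::field"
  assumes "c \<in> subfield_q M" "c \<noteq> 0"
  shows "(\<lambda>y. c * y) ` subfield_q M = subfield_q M"
proof (intro equalityI subsetI)
  fix z :: 'a assume "z \<in> subfield_q M"
  then have "z / c \<in> subfield_q M" "z = c * (z / c)"
    using assms by (simp_all add: subfield_q_divide)
  then show "z \<in> (\<lambda>y. c * y) ` subfield_q M" by blast
qed (use assms subfield_q_mult in blast)

lemma card_subfield_q_units_eq:
  fixes M P :: nat
  defines "U \<equiv> subfield_q M - {0::'a::{field,finite}}"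
  shows "card U = card ((\<lambda>x. x ^ P) ` U) * card {u \<in> U. u ^ P = 1}"
proof (rule card_eq_card_image_mult_fibre)
  fix x assume x: "x \<in> U"
  have "{z \<in> U. z ^ P = x ^ P} = (\<lambda>u. x * u) ` {u \<in> U. u ^ P = 1}"
  proof (intro equalityI subsetI)
    fix z assume z: "z \<in> {z \<in> U. z ^ P = x ^ P}"
    then have "z / x \<in> {u \<in> U. u ^ P = 1}" "z = x * (z / x)"
      using x by (auto simp: U_def subfield_q_divide power_divide)
    then show "z \<in> (\<lambda>u. x * u) ` {u \<in> U. u ^ P = 1}" by blast
  qed (use x in \<open>auto simp: U_def subfield_q_mult power_mult_distrib\<close>)
  then show "card {z \<in> U. z ^ P = x ^ P} = card {u \<in> U. u ^ P = 1}"
    using x by (simp add: U_def card_image inj_on_def)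
qed simp

section \<open>Linearized binomials and traces\<close>

definition binomial_roots :: "'a::field \<Rightarrow> 'a \<Rightarrow> nat \<Rightarrow> 'a set" where
  "binomial_roots a b T = {x. (a * x) ^ 2 ^ T = b * x}"

lemma subfield_q_power_two_power_mult:
  fixes x :: "'a::field"
  assumes "x \<in> subfield_q M" "x \<noteq> 0" "E = (2 ^ M - 1) div (2 ^ gcd T M - 1)"
  shows "x ^ (2 ^ T * E) = x ^ E"
proof -
  have "(2::nat) ^ T * E = (2 ^ T - 1) * E + E"
    by (simp add: diff_mult_distrib)
  then show ?thesis
    using subfield_q_power_two_power_minus_1_eq_1[OF assms] by (simp add: power_add)
qed

lemma power_eq_if_nonzero_binomial_root:
  fixes a b x :: "'a::field"
  assumes "a \<in> subfield_q M" "x \<in> subfield_q M" "x \<noteq> 0" "x \<in> binomial_roots a b T"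
    and "E = (2 ^ M - 1) div (2 ^ gcd T M - 1)"
  shows "a ^ E = b ^ E"
proof (cases "a = 0")
  case True
  then have "b = 0" using assms(3,4) by (simp add: binomial_roots_def power_0_left)
  with True show ?thesis by simp
next
  case False
  then have ax: "a * x \<in> subfield_q M" "a * x \<noteq> 0"
    using assms(1-3) by (simp_all add: subfield_q_mult)
  have "(a * x) ^ E = ((a * x) ^ 2 ^ T) ^ E"
    using subfield_q_power_two_power_mult[OF ax assms(5)] by (simp add: power_mult)
  also have "\<dots> = (b * x) ^ E"
    using assms(4) by (simp add: binomial_roots_def)
  finally show ?thesis
    using assms(3) by (simp add: power_mult_distrib)
qed

lemma sum_lessThan_shift_periodic:
  assumes "f s = f 0"
  shows "(\<Sum>i<s. f (Suc i)) = (\<Sum>i<s. f i :: 'b::cancel_comm_monoid_add)"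
  using sum.lessThan_Suc_shift[of f s] sum.lessThan_Suc[of f s] assms by (simp add: add.commute)

lemma abs_trace_eq: "abs_trace M s x = (\<Sum>i<s. x ^ 2 ^ (M * i))"
  by (simp add: abs_trace_def rel_trace_def power_mult)

lemma abs_trace_0 [simp]: "abs_trace M s 0 = 0"
  by (simp add: abs_trace_eq power_0_left)

lemma rel_trace_eq_abs_trace: "rel_trace m n r x = abs_trace (m * r) (n div r) x"
  by (simp add: abs_trace_def rel_trace_def mult.assoc flip: power_mult)

lemma abs_trace_mult_subfield_q:
  assumes "c \<in> subfield_q M"
  shows "abs_trace M s (c * x) = c * abs_trace M s x"
proof -
  have "c ^ 2 ^ (M * i) = c" for i
    using assms subfield_q_subset[of M "M * i"] by (auto simp: subfield_q_def)
  then show ?thesis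
    by (simp add: abs_trace_eq power_mult_distrib sum_distrib_left)
qed

lemma abs_trace_reindex:
  assumes "M = e * \<mu>" "coprime \<mu> r" "y \<in> subfield_q (e * r)"
  shows "abs_trace M r y = abs_trace e r y"
proof -
  let ?h = "\<lambda>i. y ^ 2 ^ (e * i)" and ?\<pi> = "\<lambda>j. \<mu> * j mod r"
  have "y ^ 2 ^ (M * j) = ?h (?\<pi> j)" for j
    using subfield_q_power_two_power[OF assms(3), of "M * j"]
    by (simp add: assms(1) mult.assoc mod_mult_mult1)
  then have "abs_trace M r y = (\<Sum>j<r. ?h (?\<pi> j))"
    by (simp add: abs_trace_eq)
  also have "\<dots> = (\<Sum>i<r. ?h i)"
  proof (cases "r = 0")
    case False
    have "inj_on ?\<pi> {..<r}"
    proof (rule inj_onI)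
      fix i j assume "i \<in> {..<r}" "j \<in> {..<r}" "?\<pi> i = ?\<pi> j"
      then show "i = j"
        using cong_mult_lcancel_nat[OF assms(2)] by (simp add: cong_def)
    qed
    moreover have "?\<pi> ` {..<r} \<subseteq> {..<r}" using False by auto
    ultimately have "?\<pi> ` {..<r} = {..<r}"
      by (simp add: endo_inj_surj)
    then show ?thesis
      using sum.reindex[OF \<open>inj_on ?\<pi> {..<r}\<close>, of ?h] by simp
  qed simp
  finally show ?thesis by (simp add: abs_trace_eq)
qed

section \<open>Fields with 2^N elements\<close>

context
  fixes N :: nat
  assumes card_UNIV: "card (UNIV :: 'a::{field,finite} set) = 2 ^ N"
begin

lemma CHAR_eq_2: "CHAR('a) = 2"
proof -
  have "prime CHAR('a)"
    by (rule prime_CHAR_semidom) (simp add: finite_imp_CHAR_pos)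
  moreover have "CHAR('a) dvd 2 ^ N"
    using CHAR_dvd_CARD[where 'a='a] by (simp add: card_UNIV)
  ultimately show ?thesis
    using prime_dvd_power primes_dvd_imp_eq two_is_prime_nat by blast
qed

lemma two_eq_0: "(2::'a) = 0"
  using of_nat_CHAR[where 'a='a] by (simp add: CHAR_eq_2)

lemma add_self_eq_0: "(x::'a) + x = 0"
  by (metis two_eq_0 mult_2 mult_zero_left)

lemma add_eq_0_iff_eq: "(x::'a) + y = 0 \<longleftrightarrow> x = y"
  by (metis add_eq_0_iff2 uminus_CHAR_2[OF CHAR_eq_2])

lemma of_nat_eq_parity: "(of_nat j :: 'a) = (if even j then 0 else 1)"
  by (auto simp: two_eq_0 elim!: evenE oddE)

lemma N_pos: "0 < N"
proof (rule ccontr)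
  assume "\<not> 0 < N"
  then have "card (UNIV :: 'a set) = 1" by (simp add: card_UNIV)
  then show False
    by (metis card_1_singletonE UNIV_I singletonD zero_neq_one)
qed

lemma subfield_q_N: "subfield_q N = (UNIV :: 'a set)"
  using power_card_UNIV[where 'a='a] by (simp add: subfield_q_def card_UNIV)

lemma power_two_power_N_mult: "(x::'a) ^ 2 ^ (N * j) = x"
proof -
  have "x \<in> subfield_q (N * j)"
    using subfield_q_subset[of N "N * j"] subfield_q_N by auto
  then show ?thesis by (simp add: subfield_q_def)
qed

lemma frobenius_add: "((x::'a) + y) ^ 2 ^ j = x ^ 2 ^ j + y ^ 2 ^ j"
  by (rule freshmans_dream') (simp_all add: CHAR_eq_2)

lemma frobenius_sum: "(\<Sum>i\<in>A. f i :: 'a) ^ 2 ^ j = (\<Sum>i\<in>A. f i ^ 2 ^ j)"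
  by (rule freshmans_dream_sum') (simp_all add: CHAR_eq_2)

lemma frobenius_eq_iff: "(x::'a) ^ 2 ^ j = y ^ 2 ^ j \<longleftrightarrow> x = y"
proof
  assume "x ^ 2 ^ j = y ^ 2 ^ j"
  then have "(x + y) ^ 2 ^ j = 0" by (simp add: frobenius_add add_self_eq_0)
  then show "x = y" by (simp add: add_eq_0_iff_eq)
qed simp

lemma subfield_q_add:
  "x \<in> subfield_q M \<Longrightarrow> y \<in> subfield_q M \<Longrightarrow> (x::'a) + y \<in> subfield_q M"
  by (simp add: subfield_q_def frobenius_add)

lemma power_two_power_N_mult_minus: "((y::'a) ^ 2 ^ (N * j - j)) ^ 2 ^ j = y"
proof -
  have "N * j = (N * j - j) + j" using N_pos by simp
  then show ?thesis
    using power_two_power_N_mult[of y j] by (metis power_add power_mult)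
qed

lemma frob_inv_eq: "frob_inv j (y::'a) = y ^ 2 ^ (N * j - j)"
  unfolding frob_inv_def
  using power_two_power_N_mult_minus frobenius_eq_iff by (intro the_equality) metis+

(* Raising L'(x) = 0 to the power 2^l removes the inverse Frobenius maps. *)
lemma adjoint_L_eq_0_iff:
  "adjoint_L a b k l (x::'a) = 0 \<longleftrightarrow> x \<in> binomial_roots a b (N * k - k + l)"
proof -
  have "adjoint_L a b k l x = 0 \<longleftrightarrow> frob_inv k (a * x) ^ 2 ^ l = frob_inv l (b * x) ^ 2 ^ l"
    by (simp add: adjoint_L_def add_eq_0_iff_eq frobenius_eq_iff)
  also have "frob_inv k (a * x) ^ 2 ^ l = (a * x) ^ 2 ^ (N * k - k + l)"
    by (simp add: frob_inv_eq power_add power_mult)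
  also have "frob_inv l (b * x) ^ 2 ^ l = b * x"
    by (simp add: frob_inv_eq power_two_power_N_mult_minus)
  finally show ?thesis by (simp add: binomial_roots_def)
qed

lemma card_unity_roots:
  assumes "D dvd 2 ^ N - 1"
  shows "card {x::'a. x ^ D = 1} = D"
proof -
  define E where "E = (2 ^ N - 1) div D"
  have DE: "D * E = 2 ^ N - 1"
    using assms by (simp add: E_def)
  have "(1::nat) < 2 ^ N"
    using N_pos one_less_power[of "2::nat" N] by simp
  then have pos: "0 < D" "0 < E"
    using DE by (auto intro!: gr0I)
  let ?U = "subfield_q N - {0::'a}" and ?f = "\<lambda>x::'a. x ^ D"
  have roots: "{u \<in> ?U. u ^ D = 1} = {x. x ^ D = 1}"
    using pos(1) by (auto simp: subfield_q_N power_0_left)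
  have "card (?f ` ?U) * card {x::'a. x ^ D = 1} = card ?U"
    unfolding roots[symmetric] by (rule card_subfield_q_units_eq[symmetric])
  also have "card ?U = E * D"
    using card_UNIV DE by (simp add: subfield_q_N card_Diff_singleton mult.commute)
  finally have prod: "card (?f ` ?U) * card {x::'a. x ^ D = 1} = E * D" .
  have "?f ` ?U \<subseteq> {y. y ^ E = 1}"
  proof
    fix y assume "y \<in> ?f ` ?U"
    then obtain x where x: "x \<in> ?U" "y = x ^ D" by blast
    then have "y ^ E = x ^ (2 ^ N - 1)" by (simp add: DE flip: power_mult)
    also have "\<dots> = 1" using x(1) subfield_q_iff_power_eq_1 by blast
    finally show "y \<in> {y. y ^ E = 1}" by simp
  qed
  then have image: "card (?f ` ?U) \<le> E"
    using card_unity_roots_le[OF pos(2), where 'a='a] card_mono[OF finite] by (meson order_trans)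
  show ?thesis
    by (rule mult_eq_mult_bounded_imp_eq[OF prod image card_unity_roots_le[OF pos(1)] pos(2)])
qed

lemma card_subfield_q:
  assumes "g dvd N"
  shows "card (subfield_q g :: 'a set) = 2 ^ g"
proof -
  have "0 < g" using assms N_pos dvd_pos_nat by blast
  then have pos: "0 < (2::nat) ^ g - 1"
    using one_less_power[of "2::nat" g] by simp
  have "x \<in> subfield_q g \<longleftrightarrow> x = 0 \<or> x ^ (2 ^ g - 1) = 1" for x :: 'a
    by (cases "x = 0") (simp_all add: subfield_q_iff_power_eq_1)
  then have "subfield_q g = insert 0 {x::'a. x ^ (2 ^ g - 1) = 1}"
    by auto
  moreover have "(0::'a) \<notin> {x. x ^ (2 ^ g - 1) = 1}"
    using pos by (simp add: power_0_left)
  ultimately have "card (subfield_q g :: 'a set) = Suc (card {x::'a. x ^ (2 ^ g - 1) = 1})"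
    by simp
  also have "card {x::'a. x ^ (2 ^ g - 1) = 1} = 2 ^ g - 1"
    by (rule card_unity_roots[OF two_power_minus_one_dvd[OF assms]])
  finally show ?thesis by simp
qed

lemma image_power_two_power_minus_1:
  assumes "M dvd N" "E = (2 ^ M - 1) div (2 ^ gcd T M - 1)"
  shows "(\<lambda>w. w ^ (2 ^ T - 1)) ` (subfield_q M - {0::'a}) = {c. c ^ E = 1}"
proof -
  let ?g = "gcd T M" and ?f = "\<lambda>w::'a. w ^ (2 ^ T - 1)" and ?U = "subfield_q M - {0::'a}"
  have "0 < M" using assms(1) N_pos dvd_pos_nat by blast
  then have "0 < ?g" by simp
  then have g_pos: "0 < (2::nat) ^ ?g - 1"
    using one_less_power[of "2::nat" ?g] by simp
  have "{u \<in> ?U. u ^ (2 ^ T - 1) = 1} = (subfield_q T \<inter> subfield_q M) - {0}"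
    by (auto simp: subfield_q_iff_power_eq_1)
  also have "\<dots> = subfield_q ?g - {0}"
    using subfield_q_Int[of M T, where 'a='a] \<open>0 < M\<close> by simp
  finally have fixed_units: "{u \<in> ?U. u ^ (2 ^ T - 1) = 1} = subfield_q ?g - {0}" .
  have "card ?U = card (?f ` ?U) * card (subfield_q ?g - {0::'a})"
    using card_subfield_q_units_eq[of M "2 ^ T - 1", where 'a='a] by (simp only: fixed_units)
  also have "card (subfield_q ?g - {0::'a}) = 2 ^ ?g - 1"
    using card_subfield_q[OF dvd_trans[OF gcd_dvd2 assms(1)]] by (simp add: card_Diff_singleton)
  finally have "card ?U = card (?f ` ?U) * (2 ^ ?g - 1)" .
  then have "card (?f ` ?U) * (2 ^ ?g - 1) = E * (2 ^ ?g - 1)"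
    using card_subfield_q[OF assms(1)] two_power_minus_one_div_mult[of ?g M] assms(2)
    by (simp add: card_Diff_singleton)
  then have card_f_image: "card (?f ` ?U) = E"
    using g_pos by simp
  have sub: "?f ` ?U \<subseteq> {c. c ^ E = 1}"
    using subfield_q_power_two_power_minus_1_eq_1[OF _ _ assms(2)] by (auto simp flip: power_mult)
  moreover have "card {c::'a. c ^ E = 1} \<le> E"
    using card_unity_roots_le two_power_minus_one_div_pos[of ?g M] \<open>0 < M\<close> assms(2) by simp
  moreover have "card (?f ` ?U) \<le> card {c::'a. c ^ E = 1}"
    by (rule card_mono[OF finite sub])
  ultimately show ?thesis
    using card_f_image by (intro card_subset_eq[OF finite sub]) simp
qed

lemma binomial_root_in_subfield_q:
  fixes a b :: 'a
  assumes "M dvd N" "a \<in> subfield_q M" "b \<in> subfield_q M" "a \<noteq> 0" "b \<noteq> 0" "a ^ E = b ^ E"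
    and "E = (2 ^ M - 1) div (2 ^ gcd T M - 1)"
  obtains w where "w \<in> subfield_q M" "w \<noteq> 0" "w \<in> binomial_roots a b T"
proof -
  let ?c = "b / a ^ 2 ^ T"
  have "?c ^ E = 1"
    using subfield_q_power_two_power_mult[OF assms(2,4,7)] assms(4-6)
    by (simp add: power_divide power_mult)
  then have "?c \<in> (\<lambda>w. w ^ (2 ^ T - 1)) ` (subfield_q M - {0})"
    using image_power_two_power_minus_1[OF assms(1,7)] by simp
  then obtain w where w: "w \<in> subfield_q M" "w \<noteq> 0" "?c = w ^ (2 ^ T - 1)"
    by blast
  have "w ^ 2 ^ T = w ^ (2 ^ T - 1) * w"
    by (simp flip: power_Suc2)
  moreover have "b = a ^ 2 ^ T * w ^ (2 ^ T - 1)"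
    using w(3) assms(4) by (simp add: field_simps)
  ultimately have "(a * w) ^ 2 ^ T = b * w"
    by (simp add: power_mult_distrib mult.assoc)
  with w show thesis
    using that by (simp add: binomial_roots_def)
qed

lemma binomial_roots_eq_image:
  fixes a b w :: 'a
  assumes "w \<noteq> 0" "w \<in> binomial_roots a b T" "b \<noteq> 0"
  shows "binomial_roots a b T = (\<lambda>y. w * y) ` subfield_q (gcd T N)"
proof -
  have iff: "w * y \<in> binomial_roots a b T \<longleftrightarrow> y \<in> subfield_q (gcd T N)" for y :: 'a
  proof -
    have "(a * (w * y)) ^ 2 ^ T = (b * w) * y ^ 2 ^ T"
      using assms(2) by (simp add: binomial_roots_def power_mult_distrib mult.assoc[symmetric])
    then have "w * y \<in> binomial_roots a b T \<longleftrightarrow> y \<in> subfield_q T"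
      using assms(1,3) by (simp add: binomial_roots_def subfield_q_def mult.assoc)
    also have "\<dots> \<longleftrightarrow> y \<in> subfield_q (gcd T N)"
      using subfield_q_Int[of N T, where 'a='a] N_pos by (simp add: subfield_q_N)
    finally show ?thesis .
  qed
  show ?thesis
  proof (intro equalityI subsetI)
    fix x assume "x \<in> binomial_roots a b T"
    then have "x / w \<in> subfield_q (gcd T N)" "x = w * (x / w)"
      using iff[of "x / w"] assms(1) by simp_all
    then show "x \<in> (\<lambda>y. w * y) ` subfield_q (gcd T N)" by blast
  qed (use iff in auto)
qed

lemma card_binomial_roots:
  fixes a b :: 'a
  assumes "a \<noteq> 0" "b \<noteq> 0" "a ^ E = b ^ E" "E = (2 ^ N - 1) div (2 ^ gcd T N - 1)"
  shows "card (binomial_roots a b T) = 2 ^ gcd T N"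
proof -
  obtain w where "w \<noteq> 0" "w \<in> binomial_roots a b T"
    using binomial_root_in_subfield_q[OF dvd_refl _ _ assms] by (auto simp: subfield_q_N)
  then show ?thesis
    using card_image_mult_filter[of w "subfield_q (gcd T N)" "\<lambda>_. True"]
      card_subfield_q[of "gcd T N"] binomial_roots_eq_image assms(2) by simp
qed

lemma binomial_roots_eq_0:
  fixes a b :: 'a
  assumes "a ^ E \<noteq> b ^ E" "E = (2 ^ N - 1) div (2 ^ gcd T N - 1)"
  shows "binomial_roots a b T = {0::'a}"
  using power_eq_if_nonzero_binomial_root[of a N _ b T E] assms
  by (auto simp: subfield_q_N binomial_roots_def power_0_left)

lemma card_abs_trace_binomial_roots_eq_1:
  fixes a b :: 'a
  assumes "a ^ E \<noteq> b ^ E" "E = (2 ^ N - 1) div (2 ^ gcd T N - 1)"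
  shows "card {x \<in> binomial_roots a b T. abs_trace M s x = 0} = 1"
proof -
  have "{x \<in> binomial_roots a b T. abs_trace M s x = 0} = {0}"
    using binomial_roots_eq_0[OF assms] abs_trace_0 by blast
  then show ?thesis by simp
qed

lemma abs_trace_add: "abs_trace M s ((x::'a) + y) = abs_trace M s x + abs_trace M s y"
  by (simp add: abs_trace_eq frobenius_add sum.distrib)

lemma abs_trace_power_two_power: "abs_trace M s ((x::'a) ^ 2 ^ j) = abs_trace M s x ^ 2 ^ j"
proof -
  have "(x ^ 2 ^ j) ^ 2 ^ (M * i) = (x ^ 2 ^ (M * i)) ^ 2 ^ j" for i
    by (simp only: power_two_power_add[symmetric] add.commute)
  then show ?thesis by (simp add: abs_trace_eq frobenius_sum)
qed

lemma abs_trace_mem_binomial_roots: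
  fixes a b x :: 'a
  assumes "a \<in> subfield_q M" "b \<in> subfield_q M" "x \<in> binomial_roots a b T"
  shows "abs_trace M s x \<in> binomial_roots a b T"
proof -
  have "(a * abs_trace M s x) ^ 2 ^ T = abs_trace M s (a ^ 2 ^ T * x ^ 2 ^ T)"
    by (simp add: abs_trace_mult_subfield_q[OF subfield_q_power[OF assms(1)]]
        abs_trace_power_two_power power_mult_distrib)
  also have "\<dots> = abs_trace M s (b * x)"
    using assms(3) by (simp add: binomial_roots_def power_mult_distrib)
  also have "\<dots> = b * abs_trace M s x"
    by (rule abs_trace_mult_subfield_q[OF assms(2)])
  finally show ?thesis by (simp add: binomial_roots_def)
qed

lemma abs_trace_in_subfield_q:
  assumes "(x::'a) \<in> subfield_q (M * s)"
  shows "abs_trace M s x \<in> subfield_q M"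
proof -
  have "(x ^ 2 ^ (M * i)) ^ 2 ^ M = x ^ 2 ^ (M * Suc i)" for i
    by (simp only: power_two_power_add[symmetric] mult_Suc_right add.commute)
  then have "abs_trace M s x ^ 2 ^ M = (\<Sum>i<s. x ^ 2 ^ (M * Suc i))"
    by (simp add: abs_trace_eq frobenius_sum)
  also have "\<dots> = abs_trace M s x"
    using sum_lessThan_shift_periodic[of "\<lambda>i. x ^ 2 ^ (M * i)" s] assms
    by (simp add: abs_trace_eq subfield_q_def)
  finally show ?thesis by (simp add: subfield_q_def)
qed

lemma abs_trace_mult_transitive:
  fixes x y :: 'a
  assumes "r dvd s" "y \<in> subfield_q (M * r)"
  shows "abs_trace M s (x * y) = abs_trace M r (abs_trace (M * r) (s div r) x * y)"
proof -
  let ?f = "\<lambda>i. (x * y) ^ 2 ^ (M * i)"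
  have summand: "?f (j + q * r) = (x ^ 2 ^ (M * r * q) * y) ^ 2 ^ (M * j)" for j q
  proof -
    have "y ^ 2 ^ (M * r * q) = y"
      using assms(2) subfield_q_subset[of "M * r" "M * r * q"] by (auto simp: subfield_q_def)
    moreover have "M * (j + q * r) = M * r * q + M * j" by (simp add: algebra_simps)
    ultimately show ?thesis
      by (simp only: power_two_power_add power_mult_distrib)
  qed
  have "abs_trace M s (x * y) = (\<Sum>q<s div r. sum ?f {q * r..<q * r + r})"
    using sum.nat_group[of ?f r "s div r"] assms(1) by (simp add: abs_trace_eq)
  also have "\<dots> = (\<Sum>q<s div r. \<Sum>j<r. (x ^ 2 ^ (M * r * q) * y) ^ 2 ^ (M * j))"
  proof (rule sum.cong[OF refl])
    fix q
    have "sum ?f {q * r..<q * r + r} = (\<Sum>j<r. ?f (j + q * r))"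
      using sum.shift_bounds_nat_ivl[of ?f 0 "q * r" r] by (simp add: add.commute atLeast0LessThan)
    then show "sum ?f {q * r..<q * r + r} = (\<Sum>j<r. (x ^ 2 ^ (M * r * q) * y) ^ 2 ^ (M * j))"
      by (simp only: summand)
  qed
  also have "\<dots> = (\<Sum>j<r. (abs_trace (M * r) (s div r) x * y) ^ 2 ^ (M * j))"
    by (subst sum.swap) (simp add: abs_trace_eq frobenius_sum sum_distrib_right)
  finally show ?thesis by (simp add: abs_trace_eq)
qed

lemma card_abs_trace_kernel:
  assumes "0 < M" "0 < s" "M * s dvd N"
  shows "card {z \<in> subfield_q (M * s). abs_trace M s z = (0::'a)} = 2 ^ (M * (s - 1))"
proof -
  let ?F = "subfield_q (M * s) :: 'a set" and ?G = "abs_trace M s :: 'a \<Rightarrow> 'a"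
  let ?K = "{z \<in> ?F. ?G z = 0}"
  have "card (?G ` ?F) * card ?K = card ?F"
  proof (rule card_eq_card_image_mult_fibre[symmetric])
    fix x assume x: "x \<in> ?F"
    have "{z \<in> ?F. ?G z = ?G x} = (\<lambda>u. x + u) ` ?K"
    proof (intro equalityI subsetI)
      fix z assume z: "z \<in> {z \<in> ?F. ?G z = ?G x}"
      then have "x + z \<in> ?K"
        using x by (simp add: subfield_q_add abs_trace_add add_eq_0_iff_eq add_self_eq_0)
      moreover have "z = x + (x + z)"
        by (simp add: add_self_eq_0 flip: add.assoc)
      ultimately show "z \<in> (\<lambda>u. x + u) ` ?K" by blast
    qed (use x in \<open>auto simp: subfield_q_add abs_trace_add\<close>)
    then show "card {z \<in> ?F. ?G z = ?G x} = card ?K"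
      by (simp add: card_image)
  qed simp
  also have "card ?F = 2 ^ M * 2 ^ (M * (s - 1))"
  proof -
    have "M * s = M + M * (s - 1)" using assms(2) by (cases s) auto
    then show ?thesis using card_subfield_q[OF assms(3)] by (simp add: power_add)
  qed
  finally have prod: "card (?G ` ?F) * card ?K = 2 ^ M * 2 ^ (M * (s - 1))" .
  have image: "card (?G ` ?F) \<le> 2 ^ M"
  proof -
    have "M dvd N" using assms(3) by (rule dvd_mult_left)
    then have "card (subfield_q M :: 'a set) = 2 ^ M" by (rule card_subfield_q)
    moreover have "?G ` ?F \<subseteq> subfield_q M" using abs_trace_in_subfield_q by blast
    ultimately show ?thesis by (metis card_mono finite)
  qed
  have kernel: "card ?K \<le> 2 ^ (M * (s - 1))"
  proof -
    obtain s' where s: "s = Suc s'" using assms(2) by (cases s) auto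
    let ?p = "\<Sum>i<s. monom (1::'a) (2 ^ (M * i))"
    have deg: "degree ?p = 2 ^ (M * (s - 1))"
      using degree_sum_monom_two_power[OF assms(1), of s'] by (simp add: s)
    then have "?p \<noteq> 0" by (metis degree_0 power_not_zero zero_neq_numeral)
    then have "card {x. poly ?p x = 0} \<le> 2 ^ (M * (s - 1))"
      using card_poly_roots_bound deg by metis
    moreover have "?K \<subseteq> {x. poly ?p x = 0}"
      by (auto simp: abs_trace_eq poly_sum poly_monom)
    ultimately show ?thesis by (meson card_mono finite order_trans)
  qed
  show ?thesis
    by (rule mult_eq_mult_bounded_imp_eq[OF prod image kernel]) simp
qed

context
  fixes m n :: nat
  assumes N_eq: "N = m * n"
begin

lemma card_subfield_q_abs_trace_mult_eq_0:
  fixes x :: 'a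
  assumes "r dvd n"
  shows "card {y \<in> subfield_q (m * r). abs_trace m n (x * y) = 0} =
    (if rel_trace m n r x = 0 then 2 ^ (m * r) else 2 ^ (m * (r - 1)))"
proof -
  let ?\<tau> = "rel_trace m n r x" and ?F = "subfield_q (m * r) :: 'a set"
  have pos: "0 < m" "0 < r"
    using N_pos N_eq assms by (auto intro: dvd_pos_nat)
  have mr: "m * r dvd N"
    using assms N_eq by simp
  have "m * r * (n div r) = N"
    using assms N_eq by simp
  then have \<tau>: "?\<tau> \<in> ?F"
    using abs_trace_in_subfield_q[of x "m * r" "n div r"]
    by (simp add: rel_trace_eq_abs_trace subfield_q_N)
  have trace: "abs_trace m n (x * y) = abs_trace m r (?\<tau> * y)" if "y \<in> ?F" for y
    using abs_trace_mult_transitive[OF assms that] by (simp add: rel_trace_eq_abs_trace)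
  show ?thesis
  proof (cases "?\<tau> = 0")
    case True
    then have "{y \<in> ?F. abs_trace m n (x * y) = 0} = ?F"
      using trace by auto
    then show ?thesis
      using True card_subfield_q[OF mr] by simp
  next
    case False
    have "{y \<in> ?F. abs_trace m n (x * y) = 0} = {y \<in> ?F. abs_trace m r (?\<tau> * y) = 0}"
      using trace by auto
    also have "card \<dots> = card {y \<in> (\<lambda>y. ?\<tau> * y) ` ?F. abs_trace m r y = 0}"
      by (rule card_image_mult_filter[OF False, symmetric])
    also have "\<dots> = 2 ^ (m * (r - 1))"
      using subfield_q_image_mult[OF \<tau> False] card_abs_trace_kernel[OF pos mr] by simp
    finally show ?thesis
      using False by simp
  qed
qed

lemma card_subfield_q_abs_trace_eq_0:
  assumes "m = e * \<mu>" "coprime \<mu> r" "r dvd n"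
  shows "card {y \<in> subfield_q (e * r). abs_trace m n y = (0::'a)} =
    (if even (n div r) then 2 ^ (e * r) else 2 ^ (e * (r - 1)))"
proof -
  let ?F = "subfield_q (e * r) :: 'a set"
  have pos: "0 < e" "0 < r"
    using N_pos N_eq assms by (auto intro: dvd_pos_nat)
  have er: "e * r dvd N"
    using assms N_eq by (simp add: mult_dvd_mono)
  have trace: "abs_trace m n y = of_nat (n div r) * abs_trace e r y" if "y \<in> ?F" for y
  proof -
    have "y \<in> subfield_q (m * r)"
      using that subfield_q_subset[of "e * r" "m * r"] assms(1) by auto
    then have "abs_trace m n y = abs_trace m r (abs_trace (m * r) (n div r) 1 * y)"
      using abs_trace_mult_transitive[OF assms(3), where x=1] by simp
    also have "abs_trace (m * r) (n div r) (1::'a) = of_nat (n div r)"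
      by (simp add: abs_trace_eq)
    also have "abs_trace m r (of_nat (n div r) * y) = of_nat (n div r) * abs_trace m r y"
      by (rule abs_trace_mult_subfield_q) (simp add: of_nat_eq_parity)
    also have "abs_trace m r y = abs_trace e r y"
      by (rule abs_trace_reindex[OF assms(1,2) that])
    finally show ?thesis .
  qed
  then have "{y \<in> ?F. abs_trace m n y = 0} =
      (if even (n div r) then ?F else {y \<in> ?F. abs_trace e r y = 0})"
    by (auto simp: of_nat_eq_parity)
  then show ?thesis
    using card_subfield_q[OF er] card_abs_trace_kernel[OF pos er] by simp
qed

lemma abs_trace_binomial_root_eq_0_if_dvd:
  fixes a b x :: 'a
  assumes "m dvd T" "a + b \<in> subfield_q m" "a + b \<noteq> 0" "x \<in> binomial_roots a b T"
  shows "abs_trace m n x = 0"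
proof -
  have "abs_trace m n (a * x) \<in> subfield_q T"
    using abs_trace_in_subfield_q[of "a * x" m n] subfield_q_subset[OF assms(1)]
    by (auto simp: N_eq[symmetric] subfield_q_N)
  then have "abs_trace m n (b * x) = abs_trace m n (a * x)"
    using assms(4) by (simp add: binomial_roots_def subfield_q_def flip: abs_trace_power_two_power)
  have "(a + b) * abs_trace m n x = abs_trace m n ((a + b) * x)"
    by (rule abs_trace_mult_subfield_q[OF assms(2), symmetric])
  also have "\<dots> = abs_trace m n (a * x) + abs_trace m n (b * x)"
    by (simp add: distrib_right abs_trace_add)
  finally have "(a + b) * abs_trace m n x = 0"
    using \<open>abs_trace m n (b * x) = abs_trace m n (a * x)\<close> by (simp add: add_self_eq_0)
  then show ?thesis
    using assms(3) by simp
qed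

lemma card_trace_kernel_if_dvd:
  fixes a b :: 'a
  assumes "m dvd T" "a + b \<in> subfield_q m" "a \<noteq> 0" "b \<noteq> 0" "a ^ E = b ^ E"
    and "d = gcd T N" "e = gcd T m" "r = d div e" "E = (2 ^ N - 1) div (2 ^ d - 1)"
  shows "card {x \<in> binomial_roots a b T. abs_trace m n x = 0} =
    (if a + b \<noteq> 0 \<or> (a + b = 0 \<and> rel_trace m n r (inverse a) = 0)
     then 2 ^ d else (2 ^ m) ^ (r - 1))"
proof (cases "a + b = 0")
  case False
  have "card (binomial_roots a b T) = 2 ^ d"
    using card_binomial_roots[OF assms(3-5)] assms(6,9) by simp
  moreover have "{x \<in> binomial_roots a b T. abs_trace m n x = 0} = binomial_roots a b T"
    using abs_trace_binomial_root_eq_0_if_dvd[OF assms(1,2) False] by blast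
  ultimately show ?thesis
    using False by simp
next
  case True
  then have "b = a" by (simp add: add_eq_0_iff_eq)
  have "0 < m" using N_pos N_eq by simp
  have "e = m" using assms(1,7) by (simp add: gcd_nat.absorb2)
  then have d: "d = m * r" "r dvd n"
    using gcd_quotients_coprime[OF \<open>0 < m\<close> assms(6)[unfolded N_eq] assms(7)] assms(8) by simp_all
  have "inverse a \<in> binomial_roots a b T"
    using \<open>b = a\<close> assms(3) by (simp add: binomial_roots_def)
  then have "binomial_roots a b T = (\<lambda>y. inverse a * y) ` subfield_q d"
    using binomial_roots_eq_image assms(3,4,6) by simp
  then have "card {x \<in> binomial_roots a b T. abs_trace m n x = 0} =
      card {y \<in> subfield_q (m * r). abs_trace m n (inverse a * y) = 0}"
    using card_image_mult_filter[of "inverse a"] assms(3) d(1) by simp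
  also have "\<dots> = (if rel_trace m n r (inverse a) = 0 then 2 ^ (m * r) else 2 ^ (m * (r - 1)))"
    by (rule card_subfield_q_abs_trace_mult_eq_0[OF d(2)])
  finally show ?thesis
    using True d(1) by (simp add: power_mult)
qed

lemma card_trace_kernel_subfield_coeffs:
  fixes a b :: 'a
  assumes "a \<in> subfield_q m" "b \<in> subfield_q m" "a \<noteq> 0" "b \<noteq> 0" "a ^ E = b ^ E"
    and "d = gcd T N" "e = gcd T m" "r = d div e" "E = (2 ^ N - 1) div (2 ^ d - 1)"
  shows "card {x \<in> binomial_roots a b T. abs_trace m n x = 0} =
    (if a ^ ((2 ^ m - 1) div (2 ^ e - 1)) \<noteq> b ^ ((2 ^ m - 1) div (2 ^ e - 1)) \<or> even (n div r)
     then 2 ^ d else 2 ^ (d - e))"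
proof (cases "a ^ ((2 ^ m - 1) div (2 ^ e - 1)) = b ^ ((2 ^ m - 1) div (2 ^ e - 1))")
  case False
  have "card (binomial_roots a b T) = 2 ^ d"
    using card_binomial_roots[OF assms(3-5)] assms(6,9) by simp
  moreover have "{x \<in> binomial_roots a b T. abs_trace m n x = 0} = binomial_roots a b T"
  proof -
    have "abs_trace m n x = 0" if "x \<in> binomial_roots a b T" for x
    proof (rule ccontr)
      assume "abs_trace m n x \<noteq> 0"
      moreover have "abs_trace m n x \<in> subfield_q m"
        using abs_trace_in_subfield_q[of x m n] by (simp add: N_eq[symmetric] subfield_q_N)
      moreover have "abs_trace m n x \<in> binomial_roots a b T"
        by (rule abs_trace_mem_binomial_roots[OF assms(1,2) that])
      ultimately show False
        using power_eq_if_nonzero_binomial_root[OF assms(1)] False assms(7) by blast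
    qed
    then show ?thesis by blast
  qed
  ultimately show ?thesis
    using False by simp
next
  case True
  have "m dvd N" using N_eq by simp
  obtain w where w: "w \<in> subfield_q m" "w \<noteq> 0" "w \<in> binomial_roots a b T"
    using binomial_root_in_subfield_q[OF \<open>m dvd N\<close> assms(1-4) True] assms(7) by blast
  have "0 < m" using N_pos N_eq by simp
  note arith = gcd_quotients_coprime[OF \<open>0 < m\<close> assms(6)[unfolded N_eq] assms(7)]
  have "binomial_roots a b T = (\<lambda>y. w * y) ` subfield_q (e * r)"
    using binomial_roots_eq_image[OF w(2,3) assms(4)] arith(1) assms(6,8) by simp
  then have "card {x \<in> binomial_roots a b T. abs_trace m n x = 0} =
      card {y \<in> subfield_q (e * r). abs_trace m n y = (0::'a)}"
    using card_image_mult_filter[OF w(2)] w(2) by (simp add: abs_trace_mult_subfield_q[OF w(1)])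
  also have "\<dots> = (if even (n div r) then 2 ^ (e * r) else 2 ^ (e * (r - 1)))"
    using card_subfield_q_abs_trace_eq_0[OF arith(2)] arith(3,4) assms(8) by simp
  finally show ?thesis
    using True arith(1) assms(8) by (simp add: diff_mult_distrib2)
qed

end

end

theorem mainTheorem2:
  fixes a b :: "'a::{field,finite}" and m n k l d e r :: nat
  assumes hm: "m \<ge> 1" and hn: "n \<ge> 1"
    and hcard: "card (UNIV :: 'a set) = 2 ^ (m * n)"
    and hL: "\<exists>x::'a. a * x ^ (2 ^ k) + b * x ^ (2 ^ l) \<noteq> 0"
    and hd: "d = nat (gcd (int l - int k) (int (m * n)))"
    and he: "e = nat (gcd (int l - int k) (int m))"
    and hr: "r = d div e"
  shows
    "(a ^ ((2 ^ (m * n) - 1) div (2 ^ d - 1)) \<noteq> b ^ ((2 ^ (m * n) - 1) div (2 ^ d - 1)) \<longrightarrow>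
        card {x::'a. abs_trace m n x = 0 \<and> adjoint_L a b k l x = 0} = 1)
     \<and>
     (a ^ ((2 ^ (m * n) - 1) div (2 ^ d - 1)) = b ^ ((2 ^ (m * n) - 1) div (2 ^ d - 1)) \<longrightarrow>
       ([k = l] (mod m) \<and> a + b \<in> subfield_q m \<longrightarrow>
          card {x::'a. abs_trace m n x = 0 \<and> adjoint_L a b k l x = 0} =
            (if a + b \<noteq> 0 \<or> (a + b = 0 \<and> rel_trace m n r (inverse a) = 0)
             then 2 ^ d else (2 ^ m) ^ (r - 1)))
       \<and>
       (\<not> [k = l] (mod m) \<and> a \<in> subfield_q m \<and> b \<in> subfield_q m \<longrightarrow>
          card {x::'a. abs_trace m n x = 0 \<and> adjoint_L a b k l x = 0} =
            (if a ^ ((2 ^ m - 1) div (2 ^ e - 1)) \<noteq> b ^ ((2 ^ m - 1) div (2 ^ e - 1))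
                \<or> even (n div r)
             then 2 ^ d else 2 ^ (d - e))))"
proof -
  define N T where "N = m * n" and "T = N * k - k + l"
  define E :: nat where "E = (2 ^ N - 1) div (2 ^ d - 1)"
  have card: "card (UNIV :: 'a set) = 2 ^ N" and "0 < N"
    using hcard hm hn by (simp_all add: N_def)
  have d: "d = gcd T N"
    unfolding hd T_def N_def[symmetric] by (rule gcd_shift_eq[OF dvd_refl \<open>0 < N\<close>, symmetric])
  have e: "e = gcd T m"
    unfolding he T_def by (rule gcd_shift_eq[symmetric]) (use hm hn in \<open>simp_all add: N_def\<close>)
  have cong: "[k = l] (mod m) \<longleftrightarrow> m dvd T"
    unfolding T_def by (rule dvd_shift_iff_cong[symmetric]) (use hm hn in \<open>simp_all add: N_def\<close>)
  have kernel: "{x. abs_trace m n x = 0 \<and> adjoint_L a b k l x = 0} =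
      {x \<in> binomial_roots a b T. abs_trace m n x = 0}"
    using adjoint_L_eq_0_iff[OF card, of a b k l] unfolding T_def by blast
  have "a \<noteq> 0 \<or> b \<noteq> 0"
    using hL by auto
  moreover have "0 < E"
    using two_power_minus_one_div_pos[of d N] d \<open>0 < N\<close> by (simp add: E_def)
  ultimately have nonzero: "a \<noteq> 0 \<and> b \<noteq> 0" if "a ^ E = b ^ E"
    using that by (metis power_eq_0_iff gr_implies_not0)
  have E_gcd: "E = (2 ^ N - 1) div (2 ^ gcd T N - 1)"
    by (simp only: E_def d)
  show ?thesis
    unfolding kernel cong N_def[symmetric] E_def[symmetric]
    using card_abs_trace_binomial_roots_eq_1[OF card _ E_gcd] nonzero
      card_trace_kernel_if_dvd[OF card N_def _ _ _ _ _ d e hr E_def]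
      card_trace_kernel_subfield_coeffs[OF card N_def _ _ _ _ _ d e hr E_def]
    by (intro conjI impI) blast+
qed

end
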